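(* Let $G$ be a graph with vertex set $[n]$. Distinct $G$-reduced noncrossing trees on $[n]$ have distinct signatures.
   Context: A graph on $[n]$ is noncrossing if it has no two edges $\overline{ac},\overline{bd}$ with $a<b<c<d$. A noncrossing tree $T$ on $[n]$ is $G$-reduced if $T\subset G$ and there do not exist $1\le i_1<i_2<\dots<i_m\le n$ such that $\overline{i_1i_m}\in T$, $\overline{i_{j-1}i_j}\in T$ for all $1<j<m$, $\overline{i_{m-1}i_m}\in G$, and $T\cup\overline{i_{m-1}i_m}$ is noncrossing. The signature of a noncrossing tree $T$ on $[n]$ is the sequence $s(T)=(s_1,\dots,s_n)$ defined by $s_1=1$ and, for $i>1$: $s_i=s_j$ where $j<i$ is the minimum vertex with $\overline{ji}\in T$, if such $j$ exists; otherwise $s_i=s_{i-1}+1$. *)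

theory Defs
  imports Main
begin

text \<open>A graph on [n] = {1..n} is a set of edges; an edge between a and b with a < b
  is represented by the ordered pair (a, b).\<close>

definition edges_on :: "nat \<Rightarrow> (nat \<times> nat) set" where
  "edges_on n = {(a, b). 1 \<le> a \<and> a < b \<and> b \<le> n}"

definition graph_on :: "nat \<Rightarrow> (nat \<times> nat) set \<Rightarrow> bool" where
  "graph_on n G \<longleftrightarrow> G \<subseteq> edges_on n"

definition noncrossing :: "(nat \<times> nat) set \<Rightarrow> bool" where
  "noncrossing E \<longleftrightarrow>
     \<not> (\<exists>a b c d. (a, c) \<in> E \<and> (b, d) \<in> E \<and> a < b \<and> b < c \<and> c < d)"

definition connected_on :: "nat \<Rightarrow> (nat \<times> nat) set \<Rightarrow> bool" where
  "connected_on n E \<longleftrightarrow>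
     (\<forall>i \<in> {1..n}. \<forall>j \<in> {1..n}. (i, j) \<in> (E \<union> E\<inverse>)\<^sup>*)"

definition acyclic_graph :: "(nat \<times> nat) set \<Rightarrow> bool" where
  "acyclic_graph E \<longleftrightarrow>
     (\<forall>e \<in> E. e \<notin> ((E - {e}) \<union> (E - {e})\<inverse>)\<^sup>*)"

definition tree_on :: "nat \<Rightarrow> (nat \<times> nat) set \<Rightarrow> bool" where
  "tree_on n T \<longleftrightarrow> graph_on n T \<and> connected_on n T \<and> acyclic_graph T"

definition nc_tree :: "nat \<Rightarrow> (nat \<times> nat) set \<Rightarrow> bool" where
  "nc_tree n T \<longleftrightarrow> tree_on n T \<and> noncrossing T"

text \<open>G-reduced: T \<subseteq> G and there is no increasing sequence i_1 < ... < i_m (m \<ge> 3)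
  in [n] with i_1 i_m \<in> T, i_(j-1) i_j \<in> T for 1 < j < m, i_(m-1) i_m \<in> G and
  T \<union> {i_(m-1) i_m} noncrossing.  The list xs = [i_1, ..., i_m] is 0-indexed.\<close>
definition G_reduced :: "nat \<Rightarrow> (nat \<times> nat) set \<Rightarrow> (nat \<times> nat) set \<Rightarrow> bool" where
  "G_reduced n G T \<longleftrightarrow> T \<subseteq> G \<and>
     \<not> (\<exists>xs. 3 \<le> length xs \<and> sorted_wrt (<) xs \<and> set xs \<subseteq> {1..n} \<and>
           (hd xs, last xs) \<in> T \<and>
           (\<forall>j. 1 \<le> j \<and> j < length xs - 1 \<longrightarrow> (xs ! (j - 1), xs ! j) \<in> T) \<and>
           (xs ! (length xs - 2), last xs) \<in> G \<and>
           noncrossing (insert (xs ! (length xs - 2), last xs) T))"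

fun sig_list :: "(nat \<times> nat) set \<Rightarrow> nat \<Rightarrow> nat list" where
  "sig_list T 0 = []"
| "sig_list T (Suc k) =
     (let s = sig_list T k; i = Suc k in
      s @ [if i = 1 then 1
           else if (\<exists>j. 1 \<le> j \<and> j < i \<and> (j, i) \<in> T)
           then s ! ((LEAST j. 1 \<le> j \<and> j < i \<and> (j, i) \<in> T) - 1)
           else last s + 1])"

definition signature :: "nat \<Rightarrow> (nat \<times> nat) set \<Rightarrow> nat list" where
  "signature n T = sig_list T n"

end

theory Submission
  imports Defs
begin

text \<open>Let \<open>c\<close> be the first vertex whose left neighbourhoods in \<open>T1\<close> and \<open>T2\<close> differ and
  \<open>(x, c)\<close> the rightmost differing edge there, say in \<open>T2\<close>. The signature entry \<open>s_c\<close> is one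
  plus the number of gaps below \<open>c\<close> not passed over by an edge inside \<open>[c]\<close>. Equal entries force
  \<open>T1\<close> to have a neighbour of \<open>c\<close> left of \<open>x\<close>; connectivity, acyclicity of \<open>T2\<close> and
  noncrossingness then yield an increasing \<open>T1\<close>-path \<open>v = i\<^sub>1 < \<dots> < i\<^sub>m\<^sub>-\<^sub>1 = x\<close> with
  \<open>(v, c) \<in> T1\<close>. Adding the \<open>G\<close>-edge \<open>(x, c)\<close> of \<open>T2\<close> keeps \<open>T1\<close> noncrossing, so \<open>T1\<close> is
  not \<open>G\<close>-reduced.\<close>

lemma noncrossingD:
  assumes "noncrossing E" "(a, c) \<in> E" "(b, d) \<in> E" "a < b" "b < c" "c < d"
  shows False
  using assms unfolding noncrossing_def by blast

lemma graph_onD: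
  assumes "graph_on n T" "(p, q) \<in> T"
  shows "1 \<le> p" "p < q" "q \<le> n"
  using assms unfolding graph_on_def edges_on_def by auto

lemma nc_tree_graph_on: "nc_tree n T \<Longrightarrow> graph_on n T"
  unfolding nc_tree_def tree_on_def by simp

lemma length_sig_list [simp]: "length (sig_list T k) = k"
  by (induction k) (auto simp: Let_def)

lemma take_sig_list: "k \<le> m \<Longrightarrow> take k (sig_list T m) = sig_list T k"
proof (induction m)
  case (Suc m)
  then show ?case by (cases "k = Suc m") (simp_all add: Let_def)
qed simp

lemma sig_list_nth_prefix:
  assumes "1 \<le> v" "v \<le> m"
  shows "sig_list T m ! (v - 1) = sig_list T v ! (v - 1)"
proof -
  have "sig_list T v ! (v - 1) = take v (sig_list T m) ! (v - 1)"
    using take_sig_list[OF assms(2)] by simp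
  then show ?thesis using assms by simp
qed

lemma nth_sig_list_Suc:
  assumes "1 \<le> k"
  shows "sig_list T (Suc k) ! k =
    (if \<exists>j. 1 \<le> j \<and> j < Suc k \<and> (j, Suc k) \<in> T
     then sig_list T k ! ((LEAST j. 1 \<le> j \<and> j < Suc k \<and> (j, Suc k) \<in> T) - 1)
     else sig_list T k ! (k - 1) + 1)"
proof -
  have "sig_list T k \<noteq> []" using assms by (metis length_sig_list list.size(3) not_one_le_zero)
  then show ?thesis using assms by (auto simp: Let_def nth_append last_conv_nth)
qed

text \<open>\<open>g \<in> gaps T v\<close> stands for the gap between the vertices \<open>g\<close> and \<open>g + 1\<close>, when no
  edge of \<open>T\<close> inside \<open>[v]\<close> passes over it; the signature entry \<open>s\<^sub>v\<close> counts these gaps.\<close>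
definition gaps :: "(nat \<times> nat) set \<Rightarrow> nat \<Rightarrow> nat set" where
  "gaps T v = {g. 1 \<le> g \<and> g < v \<and> \<not> (\<exists>p q. (p, q) \<in> T \<and> p \<le> g \<and> g < q \<and> q \<le> v)}"

lemma finite_gaps [simp]: "finite (gaps T v)"
  by (rule finite_subset[of _ "{..<v}"]) (auto simp: gaps_def)

lemma gaps_antimono:
  assumes "\<And>p q. (p, q) \<in> T \<Longrightarrow> q \<le> v \<Longrightarrow> (p, q) \<in> T'"
  shows "gaps T' v \<subseteq> gaps T v"
  using assms unfolding gaps_def by blast

lemma gaps_Suc_no_left_neighbour:
  assumes "graph_on n T" "\<not> (\<exists>j. 1 \<le> j \<and> j < Suc k \<and> (j, Suc k) \<in> T)"
    and "1 \<le> k"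
  shows "gaps T (Suc k) = insert k (gaps T k)"
proof -
  have "q \<noteq> Suc k" if "(p, q) \<in> T" for p q
    using assms graph_onD[OF assms(1) that] that by blast
  then show ?thesis using assms(3) unfolding gaps_def by (auto simp: le_Suc_eq)
qed

lemma gaps_least_left_neighbour:
  assumes "noncrossing T" "graph_on n T" "(u, v) \<in> T"
    and least: "\<And>j. (j, v) \<in> T \<Longrightarrow> u \<le> j"
  shows "gaps T v = gaps T u"
proof (intro set_eqI iffI)
  fix g assume "g \<in> gaps T v"
  moreover have "g < u"
  proof (rule ccontr)
    assume "\<not> g < u"
    then show False using \<open>g \<in> gaps T v\<close> assms(3) order_refl[of v] not_less unfolding gaps_def by blast
  qed
  moreover have "q \<le> v" if "q \<le> u" for q using that graph_onD(2)[OF assms(2,3)] by simp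
  ultimately show "g \<in> gaps T u" unfolding gaps_def by blast
next
  fix g assume g: "g \<in> gaps T u"
  have "False" if "(p, q) \<in> T" "p \<le> g" "g < q" "q \<le> v" for p q
  proof -
    have "g < u" using g unfolding gaps_def by simp
    moreover have "\<not> q \<le> u" using g that unfolding gaps_def by blast
    moreover have "q \<noteq> v" using least[of p] that \<open>g < u\<close> by auto
    ultimately show False using noncrossingD[OF assms(1) that(1) assms(3)] that by simp
  qed
  then show "g \<in> gaps T v" using g graph_onD[OF assms(2,3)] unfolding gaps_def by auto
qed

lemma sig_list_nth_eq_card_gaps:
  assumes "noncrossing T" "graph_on n T" "1 \<le> v"
  shows "sig_list T v ! (v - 1) = 1 + card (gaps T v)"
  using assms(3)
proof (induction v rule: less_induct)
  case (less v)
  show ?case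
  proof (cases "v = 1")
    case False
    then obtain k where v: "v = Suc k" and k: "1 \<le> k" using less.prems by (cases v) auto
    show ?thesis
    proof (cases "\<exists>j. 1 \<le> j \<and> j < v \<and> (j, v) \<in> T")
      case True
      define u where "u = (LEAST j. 1 \<le> j \<and> j < v \<and> (j, v) \<in> T)"
      have u: "1 \<le> u" "u < v" "(u, v) \<in> T"
        using LeastI_ex[OF True] unfolding u_def by auto
      have least: "u \<le> j" if "(j, v) \<in> T" for j
        using graph_onD[OF assms(2) that] that unfolding u_def by (intro Least_le) simp
      have "sig_list T v ! (v - 1) = sig_list T k ! (u - 1)"
        using nth_sig_list_Suc[OF k, of T] True unfolding u_def v by (auto simp del: sig_list.simps)
      also have "\<dots> = sig_list T u ! (u - 1)"
        using u v by (intro sig_list_nth_prefix) auto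
      also have "\<dots> = 1 + card (gaps T u)" using less.IH u by simp
      also have "gaps T u = gaps T v"
        using gaps_least_left_neighbour[OF assms(1,2) u(3) least] by simp
      finally show ?thesis .
    next
      case False
      have "sig_list T v ! (v - 1) = sig_list T k ! (k - 1) + 1"
        using nth_sig_list_Suc[OF k, of T] False unfolding v by (auto simp del: sig_list.simps)
      also have "\<dots> = 2 + card (gaps T k)" using less.IH[of k] v k by simp
      also have "\<dots> = 1 + card (gaps T v)"
        using gaps_Suc_no_left_neighbour[OF assms(2) _ k] False v by (simp add: gaps_def)
      finally show ?thesis .
    qed
  qed (simp add: gaps_def)
qed

abbreviation linked :: "('a \<times> 'a) set \<Rightarrow> 'a \<Rightarrow> 'a \<Rightarrow> bool" where
  "linked E u v \<equiv> (u, v) \<in> (E \<union> E\<inverse>)\<^sup>*"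

lemma linked_sym: "linked E u v \<Longrightarrow> linked E v u"
  by (metis converse_Un converse_converse rtrancl_converseI sup_commute)

lemma linked_closed:
  assumes "E \<subseteq> S \<times> S" "linked E a b" "a \<in> S"
  shows "b \<in> S"
  using assms(2,3) by (induction rule: rtrancl_induct) (use assms(1) in auto)

lemma linked_edge_across:
  assumes "linked E a b" "a \<in> A" "b \<notin> A"
  shows "\<exists>(u, w) \<in> E. (u \<in> A) \<noteq> (w \<in> A)"
  using assms by (induction rule: rtrancl_induct) auto

lemma linked_straddle:
  fixes E :: "(nat \<times> nat) set"
  assumes "\<And>p q. (p, q) \<in> E \<Longrightarrow> p < q" "linked E a b" "a < y" "y < b"
  shows "linked E a y \<or> (\<exists>u w. (u, w) \<in> E \<and> u < y \<and> y < w \<and> linked E a u)"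
  using assms(2-4)
proof (induction arbitrary: y rule: rtrancl_induct)
  case (step z z')
  show ?case
  proof (cases "z < y")
    case True
    then have "(z, z') \<in> E" using step(2,5) assms(1) by fastforce
    then show ?thesis using True step by blast
  next
    case False
    then show ?thesis using step by (metis linorder_neqE_nat)
  qed
qed simp

lemma acyclic_graph_no_detour:
  assumes "acyclic_graph T" "(x, c) \<in> T" "(p, c) \<in> T" "p \<noteq> x"
    and "linked E x p" "E \<subseteq> T - {(x, c)}"
  shows False
proof -
  let ?F = "T - {(x, c)}"
  have "linked ?F x p" using assms(5) rtrancl_mono[of "E \<union> E\<inverse>" "?F \<union> ?F\<inverse>"] assms(6) by blast
  moreover have "(p, c) \<in> ?F \<union> ?F\<inverse>" using assms(3,4) by auto
  ultimately have "linked ?F x c" by (rule rtrancl_into_rtrancl)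
  then show False using assms(1,2) unfolding acyclic_graph_def by blast
qed

definition interval_edges :: "(nat \<times> nat) set \<Rightarrow> nat \<Rightarrow> nat \<Rightarrow> (nat \<times> nat) set" where
  "interval_edges T a c = {(p, q) \<in> T. a \<le> p \<and> q < c}"

definition interval_component :: "(nat \<times> nat) set \<Rightarrow> nat \<Rightarrow> nat \<Rightarrow> nat set" where
  "interval_component T a c = {v. linked (interval_edges T a c) a v}"

lemma start_in_interval_component [simp]: "a \<in> interval_component T a c"
  by (simp add: interval_component_def)

lemma interval_component_bounds:
  assumes "graph_on n T" "a < c" "v \<in> interval_component T a c"
  shows "a \<le> v" "v < c"
proof -
  have "interval_edges T a c \<subseteq> {a..<c} \<times> {a..<c}"
    using graph_onD(2)[OF assms(1)] unfolding interval_edges_def by fastforce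
  moreover have "linked (interval_edges T a c) a v" "a \<in> {a..<c}"
    using assms(2,3) unfolding interval_component_def by auto
  ultimately have "v \<in> {a..<c}" by (rule linked_closed)
  then show "a \<le> v" "v < c" by auto
qed

lemma finite_interval_component:
  assumes "graph_on n T" "a < c"
  shows "finite (interval_component T a c)"
proof (rule finite_subset)
  show "interval_component T a c \<subseteq> {..<c}" using interval_component_bounds(2)[OF assms] by blast
qed simp

lemma interval_component_linked:
  assumes "u \<in> interval_component T a c" "v \<in> interval_component T a c"
  shows "linked (interval_edges T a c) u v"
proof -
  have "linked (interval_edges T a c) u a"
    using assms(1) unfolding interval_component_def by (simp add: linked_sym)
  moreover have "linked (interval_edges T a c) a v" using assms(2) unfolding interval_component_def by simp
  ultimately show ?thesis by (rule rtrancl_trans)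
qed

lemma interval_component_edge:
  assumes "graph_on n T" "a < c" "(u, w) \<in> T" "w < c"
  shows "u \<in> interval_component T a c \<longleftrightarrow> w \<in> interval_component T a c \<and> a \<le> u"
proof
  assume u: "u \<in> interval_component T a c"
  then have "a \<le> u" by (rule interval_component_bounds(1)[OF assms(1,2)])
  then have "(u, w) \<in> interval_edges T a c \<union> (interval_edges T a c)\<inverse>"
    using assms(3,4) unfolding interval_edges_def by simp
  with u have "w \<in> interval_component T a c"
    unfolding interval_component_def by (blast intro: rtrancl_into_rtrancl)
  with \<open>a \<le> u\<close> show "w \<in> interval_component T a c \<and> a \<le> u" by simp
next
  assume w: "w \<in> interval_component T a c \<and> a \<le> u"
  then have "(w, u) \<in> interval_edges T a c \<union> (interval_edges T a c)\<inverse>"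
    using assms(3,4) unfolding interval_edges_def by simp
  with w show "u \<in> interval_component T a c"
    unfolding interval_component_def by (blast intro: rtrancl_into_rtrancl)
qed

lemma interval_component_straddle:
  assumes "graph_on n T" "a < c" "M \<in> interval_component T a c"
    and "a < y" "y < M" "y \<notin> interval_component T a c"
  obtains u w where "(u, w) \<in> T" "u < y" "y < w" "w \<in> interval_component T a c"
proof -
  have "\<And>p q. (p, q) \<in> interval_edges T a c \<Longrightarrow> p < q"
    using graph_onD(2)[OF assms(1)] unfolding interval_edges_def by blast
  from linked_straddle[OF this _ assms(4,5)] assms(3,6)
  obtain u w where "(u, w) \<in> interval_edges T a c" "u < y" "y < w"
      "u \<in> interval_component T a c"
    unfolding interval_component_def by blast
  moreover from this have "w \<in> interval_component T a c"
    using interval_component_edge[OF assms(1,2)] unfolding interval_edges_def by blast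
  ultimately show thesis using that unfolding interval_edges_def by blast
qed

lemma Max_interval_component_passed_over:
  assumes "noncrossing T" "graph_on n T" "a < c"
    and "(p, q) \<in> T" "p \<le> Max (interval_component T a c)" "Max (interval_component T a c) < q" "q \<le> c"
  shows "p < a \<or> (q = c \<and> p \<in> interval_component T a c)"
proof -
  let ?B = "interval_component T a c"
  let ?M = "Max ?B"
  have fin: "finite ?B" using finite_interval_component[OF assms(2,3)] .
  have MB: "?M \<in> ?B" using Max_in[OF fin] start_in_interval_component[of a T c] by blast
  show ?thesis
  proof (cases "p \<in> ?B")
    case True
    have "q \<notin> ?B" using Max_ge[OF fin, of q] assms(6) by linarith
    then show ?thesis
      using True interval_component_edge[OF assms(2,3,4)] assms(7) by (cases "q = c") auto
  next
    case False
    show ?thesis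
    proof (rule ccontr)
      assume "\<not> ?thesis"
      then have "a < p" using False by (cases "p = a") auto
      moreover have "p < ?M" using False MB assms(5) by (cases "p = ?M") auto
      ultimately obtain u w where "(u, w) \<in> T" "u < p" "p < w" "w \<in> ?B"
        using interval_component_straddle[OF assms(2,3) MB _ _ False] by blast
      moreover have "w < q" using Max_ge[OF fin \<open>w \<in> ?B\<close>] assms(6) by linarith
      ultimately show False using noncrossingD[OF assms(1) _ assms(4)] by blast
    qed
  qed
qed

lemma interval_component_exit_edge:
  assumes "connected_on n T" "graph_on n T" "a < c" "1 \<le> a" "c \<le> n"
  obtains (right) u w where "(u, w) \<in> T" "u \<in> interval_component T a c" "c \<le> w"
    | (left) u w where "(u, w) \<in> T" "u < a" "w \<in> interval_component T a c"
proof -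
  let ?B = "interval_component T a c"
  have "c \<notin> ?B" using interval_component_bounds(2)[OF assms(2,3)] by blast
  moreover have "linked T a c" using assms unfolding connected_on_def by simp
  ultimately obtain u w where uw: "(u, w) \<in> T" "(u \<in> ?B) \<noteq> (w \<in> ?B)"
    using linked_edge_across[OF _ start_in_interval_component] by blast
  show thesis
  proof (cases "u \<in> ?B")
    case True
    then have "\<not> w < c" using uw interval_component_edge[OF assms(2,3) uw(1)] by blast
    then show thesis using True uw right by simp
  next
    case False
    then have "w \<in> ?B" using uw by blast
    then have "\<not> a \<le> u"
      using False interval_component_edge[OF assms(2,3) uw(1)] interval_component_bounds(2)[OF assms(2,3)]
      by blast
    then show thesis using \<open>w \<in> ?B\<close> uw left by simp
  qed
qed

inductive ascending_path :: "(nat \<times> nat) set \<Rightarrow> nat \<Rightarrow> nat \<Rightarrow> bool" for T where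
  ascending_path_refl: "ascending_path T a a"
| ascending_path_step: "(a, u) \<in> T \<Longrightarrow> a < u \<Longrightarrow> ascending_path T u b \<Longrightarrow> ascending_path T a b"

lemma ascending_path_le: "ascending_path T a b \<Longrightarrow> a \<le> b"
  by (induction rule: ascending_path.induct) auto

lemma ascending_path_straddle:
  assumes "ascending_path T a b" "a < y" "y < b"
  shows "ascending_path T y b \<or> (\<exists>u w. (u, w) \<in> T \<and> u < y \<and> y < w \<and> a \<le> u \<and> w \<le> b)"
  using assms
proof (induction rule: ascending_path.induct)
  case (ascending_path_step a u b)
  consider "y < u" | "y = u" | "u < y" by linarith
  then show ?case
  proof cases
    case 1
    then show ?thesis using ascending_path_step ascending_path_le[OF ascending_path_step(3)] by blast
  next
    case 3
    then show ?thesis using ascending_path_step by fastforce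
  qed (use ascending_path_step in blast)
qed simp

lemma ascending_path_interval_component:
  assumes "ascending_path T a b" "b < c"
  shows "b \<in> interval_component T a c"
proof -
  have "linked (interval_edges T a c) u v" if "ascending_path T u v" "a \<le> u" "v < c" for u v
    using that
  proof (induction rule: ascending_path.induct)
    case (ascending_path_step u u' v)
    have "u' < c" using ascending_path_le[OF ascending_path_step(3)] ascending_path_step.prems(2) by linarith
    then have "(u, u') \<in> interval_edges T a c \<union> (interval_edges T a c)\<inverse>"
      using ascending_path_step.prems(1) ascending_path_step.hyps(1) unfolding interval_edges_def by simp
    moreover have "linked (interval_edges T a c) u' v"
      using ascending_path_step by simp
    ultimately show ?case by (rule converse_rtrancl_into_rtrancl)
  qed simp
  then show ?thesis using assms unfolding interval_component_def by simp
qed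

lemma ascending_path_list:
  assumes "ascending_path T a b"
  shows "\<exists>xs. xs \<noteq> [] \<and> hd xs = a \<and> last xs = b \<and> sorted_wrt (<) xs \<and> set xs \<subseteq> {a..b} \<and>
    (\<forall>j. 1 \<le> j \<and> j < length xs \<longrightarrow> (xs ! (j - 1), xs ! j) \<in> T)"
  using assms
proof (induction rule: ascending_path.induct)
  case (ascending_path_refl a)
  show ?case by (rule exI[of _ "[a]"]) auto
next
  case (ascending_path_step a u b)
  then obtain xs where xs: "xs \<noteq> []" "hd xs = u" "last xs = b" "sorted_wrt (<) xs" "set xs \<subseteq> {u..b}"
    "\<forall>j. 1 \<le> j \<and> j < length xs \<longrightarrow> (xs ! (j - 1), xs ! j) \<in> T"
    by blast
  have "((a # xs) ! (j - 1), (a # xs) ! j) \<in> T" if "1 \<le> j" "j < length (a # xs)" for j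
  proof (cases j)
    case (Suc i)
    show ?thesis
    proof (cases i)
      case 0
      then show ?thesis using Suc xs(1,2) ascending_path_step(1) by (simp add: hd_conv_nth)
    next
      case (Suc i')
      then show ?thesis using \<open>j = Suc i\<close> xs(6) that by auto
    qed
  qed (use that in simp)
  moreover have "sorted_wrt (<) (a # xs)" using xs(4,5) ascending_path_step(2) by auto
  moreover have "set (a # xs) \<subseteq> {a..b}"
    using xs(5) ascending_path_step(2) ascending_path_le[OF ascending_path_step(3)] by auto
  ultimately show ?case using xs(1,3) by (intro exI[of _ "a # xs"]) simp
qed

lemma ascending_path_from_left_neighbour:
  assumes "noncrossing T" "ascending_path T r x" "r \<le> u" "u \<le> x" "(u, c) \<in> T" "x < c"
  shows "ascending_path T u x"
proof -
  consider "u = r" | "u = x" | "r < u" "u < x" using assms(3,4) by linarith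
  then show ?thesis
  proof cases
    case 3
    show ?thesis
    proof (rule ccontr)
      assume "\<not> ascending_path T u x"
      then obtain a b where "(a, b) \<in> T" "a < u" "u < b" "b \<le> x"
        using ascending_path_straddle[OF assms(2) 3] by blast
      then show False using noncrossingD[OF assms(1) _ assms(5)] assms(6) by force
    qed
  qed (use assms(2) ascending_path_refl in auto)
qed

lemma least_ascending_start_entering_edge:
  assumes "noncrossing T" "ascending_path T r x" "\<And>v. ascending_path T v x \<Longrightarrow> r \<le> v"
    and "(u, w) \<in> T" "u < w" "r \<le> w" "w \<le> x"
  shows "r \<le> u"
proof (rule ccontr)
  assume "\<not> r \<le> u"
  then have ur: "u < r" by simp
  have "\<not> ascending_path T w x" using assms(3)[of u] ascending_path_step[OF assms(4,5)] ur by auto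
  then have "r < w" "w < x" using assms(2,6,7) ascending_path_refl[of T x] by (auto simp: le_less)
  then obtain a b where "(a, b) \<in> T" "a < w" "w < b" "r \<le> a"
    using ascending_path_straddle[OF assms(2)] \<open>\<not> ascending_path T w x\<close> by blast
  then show False using noncrossingD[OF assms(1) assms(4)] ur by force
qed

lemma ascending_path_not_G_reduced:
  assumes "ascending_path T v x" "v < x" "(v, c) \<in> T" "x < c" "1 \<le> v" "c \<le> n"
    and "(x, c) \<in> G" "noncrossing (insert (x, c) T)"
  shows "\<not> G_reduced n G T"
proof -
  obtain xs where xs: "xs \<noteq> []" "hd xs = v" "last xs = x" "sorted_wrt (<) xs" "set xs \<subseteq> {v..x}"
    "\<forall>j. 1 \<le> j \<and> j < length xs \<longrightarrow> (xs ! (j - 1), xs ! j) \<in> T"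
    using ascending_path_list[OF assms(1)] by blast
  have len: "2 \<le> length xs"
  proof (cases xs)
    case (Cons a l)
    then show ?thesis using xs(2,3) assms(2) by (cases l) auto
  qed (use xs in simp)
  define ys where "ys = xs @ [c]"
  have "length ys - 2 = length xs - 1" "length xs - 1 < length xs" using len by (simp_all add: ys_def)
  then have "ys ! (length ys - 2) = xs ! (length xs - 1)" unfolding ys_def by (simp only: nth_append if_True)
  also have "\<dots> = x" using xs(1,3) by (simp add: last_conv_nth)
  finally have penultimate: "ys ! (length ys - 2) = x" .
  have last: "last ys = c" by (simp add: ys_def)
  have "3 \<le> length ys" using len by (simp add: ys_def)
  moreover have "sorted_wrt (<) ys" using xs(4,5) assms(4) by (auto simp: ys_def sorted_wrt_append)
  moreover have "set ys \<subseteq> {1..n}" using xs(5) assms(4-6) by (auto simp: ys_def)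
  moreover have "(hd ys, last ys) \<in> T" using xs(1,2) assms(3) by (simp add: ys_def)
  moreover have "\<forall>j. 1 \<le> j \<and> j < length ys - 1 \<longrightarrow> (ys ! (j - 1), ys ! j) \<in> T"
    using xs(6) by (auto simp: ys_def nth_append)
  moreover have "(ys ! (length ys - 2), last ys) \<in> G"
    using penultimate last assms(7) by simp
  moreover have "noncrossing (insert (ys ! (length ys - 2), last ys) T)"
    using penultimate last assms(8) by simp
  ultimately show ?thesis unfolding G_reduced_def by blast
qed

context
  fixes n :: nat and T1 T2 :: "(nat \<times> nat) set" and c x :: nat
  assumes tree1: "nc_tree n T1" and tree2: "nc_tree n T2"
    and agree_below: "\<And>p q. q < c \<Longrightarrow> (p, q) \<in> T1 \<longleftrightarrow> (p, q) \<in> T2"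
    and xc_in_T2: "(x, c) \<in> T2" and xc_notin_T1: "(x, c) \<notin> T1"
    and agree_right: "\<And>y. x < y \<Longrightarrow> (y, c) \<in> T1 \<longleftrightarrow> (y, c) \<in> T2"
    and sig_eq: "sig_list T1 c ! (c - 1) = sig_list T2 c ! (c - 1)"
begin

lemma noncrossing_T1: "noncrossing T1" and graph_on_T1: "graph_on n T1"
  and connected_on_T1: "connected_on n T1"
  using tree1 unfolding nc_tree_def tree_on_def by simp_all

lemma noncrossing_T2: "noncrossing T2" and graph_on_T2: "graph_on n T2"
  and acyclic_graph_T2: "acyclic_graph T2"
  using tree2 unfolding nc_tree_def tree_on_def by simp_all

lemma x_c_bounds: "1 \<le> x" "x < c" "c \<le> n"
  using graph_onD[OF graph_on_T2 xc_in_T2] by simp_all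

lemma right_neighbour_not_in_interval_component:
  assumes "(u, c) \<in> T1" "x < u" "x \<in> interval_component T1 a c"
  shows "u \<notin> interval_component T1 a c"
proof
  assume "u \<in> interval_component T1 a c"
  then have "linked (interval_edges T1 a c) x u"
    using assms(3) by (rule interval_component_linked[rotated])
  moreover have "interval_edges T1 a c \<subseteq> T2 - {(x, c)}"
    using agree_below unfolding interval_edges_def by auto
  moreover have "(u, c) \<in> T2" using assms(1,2) agree_right by blast
  ultimately show False
    using acyclic_graph_no_detour[OF acyclic_graph_T2 xc_in_T2] assms(2) by blast
qed

text \<open>Otherwise the edges of \<open>T1\<close> ending at \<open>c\<close> would all be edges of \<open>T2\<close>, so \<open>T2\<close> has
  no more gaps below \<open>c\<close> than \<open>T1\<close>; but \<open>T1\<close> has a gap in \<open>[x, c)\<close>, which \<open>(x, c)\<close> closes in \<open>T2\<close>.\<close>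
lemma left_neighbour_below_x: "\<exists>j<x. (j, c) \<in> T1"
proof (rule ccontr)
  assume "\<not> ?thesis"
  then have right: "x < j \<and> (j, c) \<in> T2" if "(j, c) \<in> T1" for j
    using that xc_notin_T1 agree_right by (metis linorder_neqE_nat)
  have sub: "gaps T2 c \<subseteq> gaps T1 c"
  proof (rule gaps_antimono)
    fix p q assume "(p, q) \<in> T1" "q \<le> c"
    then show "(p, q) \<in> T2" using agree_below right by (cases "q = c") auto
  qed
  have "card (gaps T2 c) = card (gaps T1 c)"
    using sig_eq x_c_bounds sig_list_nth_eq_card_gaps[OF noncrossing_T1 graph_on_T1]
      sig_list_nth_eq_card_gaps[OF noncrossing_T2 graph_on_T2] by simp
  then have gaps_eq: "gaps T2 c = gaps T1 c" using card_subset_eq[OF finite_gaps sub] by blast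
  let ?B = "interval_component T1 x c"
  define M where "M = Max ?B"
  have "M \<in> ?B"
    using Max_in[OF finite_interval_component[OF graph_on_T1 x_c_bounds(2)]]
      start_in_interval_component[of x T1 c] unfolding M_def by blast
  then have xM: "x \<le> M" "M < c" using interval_component_bounds[OF graph_on_T1 x_c_bounds(2)] by auto
  have "M \<in> gaps T1 c"
  proof -
    have False if pq: "(p, q) \<in> T1" "p \<le> M" "M < q" "q \<le> c" for p q
    proof -
      have "p < x \<or> (q = c \<and> p \<in> ?B)"
        using Max_interval_component_passed_over[OF noncrossing_T1 graph_on_T1 x_c_bounds(2) pq[unfolded M_def]] .
      then show False
      proof
        assume "p < x"
        then have "q \<noteq> c" using right[of p] pq(1) by auto
        then have "(p, q) \<in> T2" "x < q" "q < c" using agree_below pq xM(1) by auto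
        then show False using noncrossingD[OF noncrossing_T2 _ xc_in_T2] \<open>p < x\<close> by blast
      next
        assume "q = c \<and> p \<in> ?B"
        then show False
          using right_neighbour_not_in_interval_component[of p x] right[of p] pq(1) by auto
      qed
    qed
    then show ?thesis using xM x_c_bounds unfolding gaps_def by auto
  qed
  moreover have "M \<notin> gaps T2 c" using xc_in_T2 xM unfolding gaps_def by auto
  ultimately show False using gaps_eq by simp
qed

lemma noncrossing_insert_xc: "noncrossing (insert (x, c) T1)"
  unfolding noncrossing_def
proof clarify
  fix a b a' b'
  assume e: "(a, b) \<in> insert (x, c) T1" "(a', b') \<in> insert (x, c) T1" "a < a'" "a' < b" "b < b'"
  obtain j where j: "j < x" "(j, c) \<in> T1" using left_neighbour_below_x by blast
  show False
  proof (cases "(a, b) = (x, c)")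
    case True
    then have "(a', b') \<in> T1" using e by auto
    then show False using noncrossingD[OF noncrossing_T1 j(2)] True e j(1) by force
  next
    case False
    then have ab: "(a, b) \<in> T1" using e(1) by auto
    show False
    proof (cases "(a', b') = (x, c)")
      case True
      then have "(a, b) \<in> T2" using agree_below ab e by auto
      then show False using noncrossingD[OF noncrossing_T2 _ xc_in_T2] True e by auto
    next
      case False
      then show False using noncrossingD[OF noncrossing_T1 ab] e by auto
    qed
  qed
qed

text \<open>Take \<open>r\<close> leftmost with an ascending path to \<open>x\<close>. Some edge leaves the vertices reachable
  from \<open>r\<close> inside \<open>[r, c)\<close>; minimality of \<open>r\<close>, noncrossingness and acyclicity of \<open>T2\<close> leave
  only an edge \<open>(u, c)\<close> with \<open>u < x\<close>.\<close>
lemma ascending_path_to_left_neighbour: "\<exists>v<x. ascending_path T1 v x \<and> (v, c) \<in> T1"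
proof -
  define r where "r = (LEAST v. ascending_path T1 v x)"
  have r: "ascending_path T1 r x"
    unfolding r_def by (rule LeastI[of _ x]) (rule ascending_path_refl)
  have r_least: "r \<le> v" if "ascending_path T1 v x" for v
    unfolding r_def using that by (rule Least_le)
  have "r \<le> x" using ascending_path_le[OF r] .
  have path_from: "ascending_path T1 u x" if "r \<le> u" "u < x" "(u, c) \<in> T1" for u
    using ascending_path_from_left_neighbour[OF noncrossing_T1 r that(1) _ that(3)] that(2) x_c_bounds
    by simp
  obtain j where j: "j < x" "(j, c) \<in> T1" using left_neighbour_below_x by blast
  show ?thesis
  proof (cases "r \<le> j")
    case True
    then show ?thesis using path_from[OF True j] j by blast
  next
    case False
    let ?A = "interval_component T1 r c"
    have "1 \<le> r" using graph_onD(1)[OF graph_on_T1 j(2)] False by simp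
    have "r < c" using \<open>r \<le> x\<close> x_c_bounds(2) by simp
    have "x \<in> ?A" using ascending_path_interval_component[OF r x_c_bounds(2)] .
    consider (right) u w where "(u, w) \<in> T1" "u \<in> ?A" "c \<le> w"
      | (left) u w where "(u, w) \<in> T1" "u < r" "w \<in> ?A"
      using interval_component_exit_edge[OF connected_on_T1 graph_on_T1 \<open>r < c\<close> \<open>1 \<le> r\<close> x_c_bounds(3)]
      by blast
    then show ?thesis
    proof cases
      case (right u w)
      have "r \<le> u" "u < c" using interval_component_bounds[OF graph_on_T1 \<open>r < c\<close> right(2)] by simp_all
      have "w = c"
      proof (rule ccontr)
        assume "w \<noteq> c"
        then show False
          using noncrossingD[OF noncrossing_T1 j(2) right(1)] False \<open>r \<le> u\<close> \<open>u < c\<close> right(3) by simp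
      qed
      have "u \<noteq> x" using xc_notin_T1 right(1) \<open>w = c\<close> by blast
      moreover have "\<not> x < u"
      proof
        assume "x < u"
        with right(1) \<open>w = c\<close> have "u \<notin> ?A"
          using right_neighbour_not_in_interval_component[OF _ _ \<open>x \<in> ?A\<close>] by simp
        then show False using right(2) by simp
      qed
      ultimately have "u < x" by simp
      then show ?thesis using path_from[OF \<open>r \<le> u\<close>] right(1) \<open>w = c\<close> by blast
    next
      case (left u w)
      have "r \<le> w" "w < c" using interval_component_bounds[OF graph_on_T1 \<open>r < c\<close> left(3)] by simp_all
      have "u < w" using graph_onD(2)[OF graph_on_T1 left(1)] .
      have "\<not> w \<le> x"
        using least_ascending_start_entering_edge[OF noncrossing_T1 r r_least left(1) \<open>u < w\<close> \<open>r \<le> w\<close>] left(2) by linarith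
      then have "u < x" "x < w" using left(2) \<open>r \<le> x\<close> by linarith+
      moreover have "(u, w) \<in> T2" using agree_below left(1) \<open>w < c\<close> by blast
      ultimately show ?thesis using noncrossingD[OF noncrossing_T2 _ xc_in_T2 _ _ \<open>w < c\<close>] by blast
    qed
  qed
qed

lemma not_G_reduced:
  assumes "T2 \<subseteq> G"
  shows "\<not> G_reduced n G T1"
proof -
  obtain v where v: "v < x" "ascending_path T1 v x" "(v, c) \<in> T1"
    using ascending_path_to_left_neighbour by blast
  show ?thesis
    using ascending_path_not_G_reduced[OF v(2,1,3) x_c_bounds(2) _ x_c_bounds(3) _ noncrossing_insert_xc]
      graph_onD(1)[OF graph_on_T1 v(3)] assms xc_in_T2 by blast
qed

end

lemma extremal_difference:
  assumes "T1 \<noteq> T2" "graph_on n T1" "graph_on n T2"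
  obtains x c where "(x, c) \<in> T1 \<union> T2" "(x, c) \<notin> T1 \<inter> T2"
    "\<And>p q. q < c \<Longrightarrow> (p, q) \<in> T1 \<longleftrightarrow> (p, q) \<in> T2"
    "\<And>y. x < y \<Longrightarrow> (y, c) \<in> T1 \<longleftrightarrow> (y, c) \<in> T2"
proof -
  define D where "D q = {p. (p, q) \<in> T1 \<longleftrightarrow> (p, q) \<notin> T2}" for q
  define c where "c = (LEAST q. D q \<noteq> {})"
  have "\<exists>q. D q \<noteq> {}" using assms(1) unfolding D_def by auto
  then have "D c \<noteq> {}" unfolding c_def by (rule LeastI_ex)
  have below: "(p, q) \<in> T1 \<longleftrightarrow> (p, q) \<in> T2" if "q < c" for p q
    using not_less_Least[OF that[unfolded c_def]] unfolding D_def by blast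
  have "D c \<subseteq> {..<c}" using graph_onD(2)[OF assms(2)] graph_onD(2)[OF assms(3)] unfolding D_def by auto
  then have fin: "finite (D c)" by (rule finite_subset) simp
  define x where "x = Max (D c)"
  have "x \<in> D c" unfolding x_def using fin \<open>D c \<noteq> {}\<close> by (rule Max_in)
  moreover have "(y, c) \<in> T1 \<longleftrightarrow> (y, c) \<in> T2" if "x < y" for y
    using Max_ge[OF fin, of y] that unfolding x_def D_def by auto
  ultimately show thesis using below by (intro that[of x c]) (auto simp: D_def)
qed

theorem lemma3p12:
  fixes n :: nat and G T1 T2 :: "(nat \<times> nat) set"
  assumes "graph_on n G"
    and "nc_tree n T1" and "G_reduced n G T1"
    and "nc_tree n T2" and "G_reduced n G T2"
    and "T1 \<noteq> T2"
  shows "signature n T1 \<noteq> signature n T2"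
proof
  assume sig: "signature n T1 = signature n T2"
  have graphs: "graph_on n T1" "graph_on n T2" using assms(2,4) by (simp_all add: nc_tree_graph_on)
  obtain x c where xc: "(x, c) \<in> T1 \<union> T2" "(x, c) \<notin> T1 \<inter> T2"
    and below: "\<And>p q. q < c \<Longrightarrow> (p, q) \<in> T1 \<longleftrightarrow> (p, q) \<in> T2"
    and right: "\<And>y. x < y \<Longrightarrow> (y, c) \<in> T1 \<longleftrightarrow> (y, c) \<in> T2"
    by (rule extremal_difference[OF assms(6) graphs]) (rule that)
  have "1 \<le> c" "c \<le> n"
    using xc(1) graph_onD[OF graphs(1), of x c] graph_onD[OF graphs(2), of x c] by auto
  then have sig_c: "sig_list T1 c ! (c - 1) = sig_list T2 c ! (c - 1)"
    using sig sig_list_nth_prefix[of c n, symmetric] unfolding signature_def by simp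
  have "T1 \<subseteq> G" "T2 \<subseteq> G" using assms(3,5) unfolding G_reduced_def by simp_all
  show False
  proof (cases "(x, c) \<in> T2")
    case True
    with xc have "(x, c) \<notin> T1" by blast
    from not_G_reduced[OF assms(2,4) below True this right sig_c \<open>T2 \<subseteq> G\<close>] assms(3) show False ..
  next
    case False
    with xc have "(x, c) \<in> T1" by blast
    have below': "(p, q) \<in> T2 \<longleftrightarrow> (p, q) \<in> T1" if "q < c" for p q using below[OF that] by simp
    have right': "(y, c) \<in> T2 \<longleftrightarrow> (y, c) \<in> T1" if "x < y" for y using right[OF that] by simp
    from not_G_reduced[OF assms(4,2) below' \<open>(x, c) \<in> T1\<close> False right' sig_c[symmetric] \<open>T1 \<subseteq> G\<close>] assms(5)
    show False ..
  qed
qed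

end
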